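(* Let $k\geq 2$ and $n\geq 2t\geq 2$ be integers. Let $B_k(n,t)$ be the number of length-$n$ words over $\Sigma_k$ that have a unique border, this border having length $t$. Then \[\frac{B_k(n,t)}{k^n}\leq \frac{1}{k^t}.\]
   Context: $\Sigma_k=\{0,1,\ldots,k-1\}$. A border of a word $w$ is a non-empty word that is both a proper prefix and a proper suffix of $w$. A word has a unique border if it has exactly one border. *)

theory Defs
  imports Complex_Main "HOL-Library.Sublist"
begin

definition words :: "nat \<Rightarrow> nat \<Rightarrow> nat list set" where
  "words k n = {w. length w = n \<and> set w \<subseteq> {0..<k}}"

definition is_border :: "'a list \<Rightarrow> 'a list \<Rightarrow> bool" where
  "is_border u w \<longleftrightarrow> u \<noteq> [] \<and> strict_prefix u w \<and> strict_suffix u w"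

definition borders :: "'a list \<Rightarrow> 'a list set" where
  "borders w = {u. is_border u w}"

definition B :: "nat \<Rightarrow> nat \<Rightarrow> nat \<Rightarrow> nat" where
  "B k n t = card {w \<in> words k n. \<exists>u. borders w = {u} \<and> length u = t}"

end

theory Submission
  imports Defs
begin

text \<open>A word with a unique border of length \<open>t\<close> in particular has its length-\<open>t\<close> prefix equal
  to its length-\<open>t\<close> suffix. When \<open>2 t \<le> n\<close> the prefix lies inside the first \<open>n - t\<close> letters, so
  such a word is determined by those letters; hence there are at most \<open>k ^ (n - t)\<close> of them.\<close>

lemma words_eq_lists: "words k n = {w. set w \<subseteq> {0..<k} \<and> length w = n}"
  unfolding words_def by auto

lemma finite_words: "finite (words k n)"
  unfolding words_eq_lists by (rule finite_lists_length_eq) simp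

lemma card_words: "card (words k n) = k ^ n"
  unfolding words_eq_lists by (simp add: card_lists_length_eq)

lemma border_eq_take:
  assumes "is_border u w"
  shows "u = take (length u) w"
  using assms by (auto simp: is_border_def strict_prefix_def prefix_def)

lemma border_eq_drop:
  assumes "is_border u w"
  shows "u = drop (length w - length u) w"
  using assms by (auto simp: is_border_def strict_suffix_def suffix_def)

lemma unique_border_imp_drop_eq_take:
  assumes "borders w = {u}" and "length u = t"
  shows "drop (length w - t) w = take t w"
proof -
  have "is_border u w"
    using assms(1) unfolding borders_def by auto
  then show ?thesis
    using border_eq_take border_eq_drop assms(2) by metis
qed

lemma inj_on_take_drop_eq_take:
  assumes "2 * t \<le> n"
  shows "inj_on (take (n - t)) {w. drop (n - t) w = take t w}"
proof
  fix x y
  assume x: "x \<in> {w. drop (n - t) w = take t w}" and y: "y \<in> {w. drop (n - t) w = take t w}"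
    and eq: "take (n - t) x = take (n - t) y"
  have "take t x = take t y"
    using arg_cong[OF eq, of "take t"] assms by (simp add: min_absorb1)
  then have "drop (n - t) x = drop (n - t) y"
    using x y by simp
  then show "x = y"
    using eq by (metis append_take_drop_id)
qed

lemma card_words_drop_eq_take_le:
  assumes "2 * t \<le> n"
  shows "card {w \<in> words k n. drop (n - t) w = take t w} \<le> k ^ (n - t)"
proof -
  let ?T = "{w \<in> words k n. drop (n - t) w = take t w}"
  have "inj_on (take (n - t)) ?T"
    using inj_on_take_drop_eq_take[OF assms] by (rule inj_on_subset) blast
  moreover have "take (n - t) ` ?T \<subseteq> words k (n - t)"
    using assms by (auto simp: words_def dest: in_set_takeD)
  ultimately have "card ?T \<le> card (words k (n - t))"
    using finite_words by (rule card_inj_on_le)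
  then show ?thesis
    by (simp add: card_words)
qed

lemma B_le_power:
  assumes "2 * t \<le> n"
  shows "B k n t \<le> k ^ (n - t)"
proof -
  have "{w \<in> words k n. \<exists>u. borders w = {u} \<and> length u = t}
      \<subseteq> {w \<in> words k n. drop (n - t) w = take t w}"
    using unique_border_imp_drop_eq_take by (fastforce simp: words_def)
  then have "B k n t \<le> card {w \<in> words k n. drop (n - t) w = take t w}"
    unfolding B_def by (intro card_mono) (auto simp: finite_words)
  also have "\<dots> \<le> k ^ (n - t)"
    using assms by (rule card_words_drop_eq_take_le)
  finally show ?thesis .
qed

theorem lemma11:
  fixes k n t :: nat
  assumes "k \<ge> 2" and "t \<ge> 1" and "n \<ge> 2 * t"
  shows "real (B k n t) / real k ^ n \<le> 1 / real k ^ t"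
proof -
  have k_pos: "real k > 0"
    using assms(1) by simp
  have "real (B k n t) \<le> real k ^ (n - t)"
    using B_le_power[OF assms(3)] by (metis of_nat_le_iff of_nat_power)
  then have "real (B k n t) / real k ^ n \<le> real k ^ (n - t) / real k ^ n"
    using k_pos by (simp add: divide_right_mono)
  also have "\<dots> = 1 / real k ^ t"
    using k_pos assms(3) by (simp add: power_diff)
  finally show ?thesis .
qed

end
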